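(* Let $A<0<B$ be integers and let $\mu\in\mathcal M_0(\mathbb Z)$ satisfy $\mu([A,B])=1$, $\mu(\{A\})>0$, $\mu(\{B\})>0$. Let $$\mathcal R_\mu=\{\mathbf r\in[0,1]^{\mathbb Z}: r_i=1\text{ for } i\notin(A,B),\ \text{and } \mathbb P(S_{\tau(\mathbf r)}=i)\le\mu(\{i\})\text{ for } i\in(A,B)\}.$$ Then $\mathcal R_\mu$ has a maximal element $\mathbf r^{\max}$, i.e. $r^{\max}_i\ge r_i$ for all $i\in\mathbb Z$ and all $\mathbf r\in\mathcal R_\mu$, and $\tau(\mathbf r^{\max})\in\mathrm{SEP}(\mathbb F^{S,\boldsymbol\xi},\mu)$; that is, $S_{\tau(\mathbf r^{\max})}\sim\mu$ and $(S_{t\wedge\tau(\mathbf r^{\max})})_{t\ge0}$ is uniformly integrable.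
   Context: $S=(S_t)_{t\ge0}$ is a simple symmetric random walk on $\mathbb Z$ with $S_0=0$ (discrete time). $\mathcal M_0(\mathbb Z)$ is the set of probability measures on $\mathbb Z$ with finite first moment and mean zero. For $\mathbf r=(r_x)_{x\in\mathbb Z}\in[0,1]^{\mathbb Z}$, let $\boldsymbol\xi=\{\xi_{t,x}\}_{t\ge0,x\in\mathbb Z}$ be Bernoulli random variables, mutually independent and independent of $S$, with $\mathbb P(\xi_{t,x}=0)=r_x=1-\mathbb P(\xi_{t,x}=1)$, and $\tau(\mathbf r):=\inf\{t\ge0:\xi_{t,S_t}=0\}$, a stopping time for $\mathbb F^{S,\boldsymbol\xi}$, $\mathcal F^{S,\boldsymbol\xi}_t:=\sigma(S_u,\xi_{u,S_u}:u\le t)$. $\mathrm{SEP}(\mathbb F,\mu)$ is the set of $\mathbb F$-stopping times $\tau$ with $S_\tau\sim\mu$ such that $(S_{t\wedge\tau})_{t\ge0}$ is uniformly integrable. *)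

theory Defs
  imports "HOL-Probability.Probability"
begin

text \<open>A sample point is a pair (coins, xis): coins u is the direction of the
  (u+1)-th step of the walk (True = +1, False = -1); xis (t,x) is the Bernoulli variable
  xi_{t,x} (True = 1, False = 0).\<close>

type_synonym sample = "(nat \<Rightarrow> bool) \<times> (nat \<times> int \<Rightarrow> bool)"

definition walk :: "sample \<Rightarrow> nat \<Rightarrow> int" where
  "walk \<omega> t = (\<Sum>u<t. if fst \<omega> u then 1 else -1)"

definition xi :: "sample \<Rightarrow> nat \<Rightarrow> int \<Rightarrow> bool" where
  "xi \<omega> t x = snd \<omega> (t, x)"

definition model :: "(int \<Rightarrow> real) \<Rightarrow> sample measure" where
  "model r = (PiM UNIV (\<lambda>_. measure_pmf (bernoulli_pmf (1/2))))
              \<Otimes>\<^sub>M (PiM UNIV (\<lambda>(t, x). measure_pmf (bernoulli_pmf (1 - r x))))"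

definition tau :: "sample \<Rightarrow> enat" where
  "tau \<omega> = (if \<exists>t. \<not> xi \<omega> t (walk \<omega> t) then enat (LEAST t. \<not> xi \<omega> t (walk \<omega> t)) else \<infinity>)"

definition filt :: "(int \<Rightarrow> real) \<Rightarrow> nat \<Rightarrow> sample measure" where
  "filt r t = vimage_algebra (space (model r))
     (\<lambda>\<omega>. restrict (\<lambda>u. (walk \<omega> u, xi \<omega> u (walk \<omega> u))) {..t})
     (PiM {..t} (\<lambda>_. count_space (UNIV :: (int \<times> bool) set)))"

definition stopping_time_enat :: "(nat \<Rightarrow> 'a measure) \<Rightarrow> ('a \<Rightarrow> enat) \<Rightarrow> bool" where
  "stopping_time_enat F T \<longleftrightarrow> (\<forall>t::nat. Measurable.pred (F t) (\<lambda>\<omega>. T \<omega> \<le> enat t))"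

definition stopped :: "sample \<Rightarrow> nat \<Rightarrow> int" where
  "stopped \<omega> t = walk \<omega> (case tau \<omega> of enat n \<Rightarrow> min t n | \<infinity> \<Rightarrow> t)"

definition uniformly_integrable :: "'a measure \<Rightarrow> (nat \<Rightarrow> 'a \<Rightarrow> real) \<Rightarrow> bool" where
  "uniformly_integrable M X \<longleftrightarrow>
     (\<forall>t. X t \<in> borel_measurable M) \<and>
     ((\<lambda>K::real. SUP t. \<integral>\<^sup>+ \<omega>. ennreal \<bar>X t \<omega>\<bar> * indicator {\<omega> \<in> space M. K < \<bar>X t \<omega>\<bar>} \<omega> \<partial>M)
        \<longlongrightarrow> 0) at_top"

definition hit_prob :: "(int \<Rightarrow> real) \<Rightarrow> int \<Rightarrow> real" where
  "hit_prob r i = measure (model r) {\<omega> \<in> space (model r). \<exists>n. tau \<omega> = enat n \<and> walk \<omega> n = i}"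

definition R_set :: "int \<Rightarrow> int \<Rightarrow> int pmf \<Rightarrow> (int \<Rightarrow> real) set" where
  "R_set A B \<mu> = {r. (\<forall>x. 0 \<le> r x \<and> r x \<le> 1) \<and> (\<forall>i. i \<notin> {A<..<B} \<longrightarrow> r i = 1)
                    \<and> (\<forall>i \<in> {A<..<B}. hit_prob r i \<le> pmf \<mu> i)}"

end

theory Submission
  imports Defs
begin

text \<open>For a rate r that equals one outside (A, B), let U n x = P(n \<le> \<tau>, S n = x) be the
  density of the walk that has survived n steps; then P(S \<tau> = i) = \<Sum>n. r i * U n i. Testing the
  one-step recursion for U against affine functions shows that the hitting distribution has mass one
  and mean zero, and testing it against (x - A)(B - x) bounds the expected time spent in (A, B) by -AB.
  The admissible rates are closed under pointwise maxima, and the hitting density at i decreases when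
  the rate is raised away from i and is lower semicontinuous in r, so the pointwise supremum r_max is
  admissible. By maximality the constraint at i is tight wherever r_max i < 1; and r_max i = 1 inside
  (A, B) is impossible, since such a site is a barrier hiding the mass that \<mu> puts on A or on B.
  Mass and mean then force equality at A and B as well. Finally S \<tau> stays in [A, B], so the stopped
  walk is bounded and hence uniformly integrable.\<close>

section \<open>The canonical probability space\<close>

abbreviation coin_space :: "(nat \<Rightarrow> bool) measure" where
  "coin_space \<equiv> PiM UNIV (\<lambda>_. measure_pmf (bernoulli_pmf (1/2)))"

abbreviation mark_space :: "(int \<Rightarrow> real) \<Rightarrow> (nat \<times> int \<Rightarrow> bool) measure" where
  "mark_space r \<equiv> PiM UNIV (\<lambda>(t, x). measure_pmf (bernoulli_pmf (1 - r x)))"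

lemma prob_space_coin_space: "prob_space coin_space"
  by (rule prob_space_PiM) (simp add: prob_space_measure_pmf)

lemma prob_space_mark_space: "prob_space (mark_space r)"
  by (rule prob_space_PiM) (auto simp: prob_space_measure_pmf split: prod.splits)

lemma prob_space_model: "prob_space (model r)"
  unfolding model_def by (intro prob_space_pair prob_space_coin_space prob_space_mark_space)

lemma space_coin_space [simp]: "space coin_space = UNIV"
  by (auto simp: space_PiM PiE_UNIV_domain)

lemma space_mark_space [simp]: "space (mark_space r) = UNIV"
  by (auto simp: space_PiM PiE_UNIV_domain split: prod.splits)

lemma space_model [simp]: "space (model r) = UNIV"
  by (simp add: model_def space_pair_measure)

lemma measurable_coin [measurable]: "Measurable.pred (model r) (\<lambda>\<omega>. fst \<omega> u)"
  unfolding model_def by measurable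

lemma measurable_mark [measurable]: "Measurable.pred (model r) (\<lambda>\<omega>. snd \<omega> j)"
proof -
  have "(\<lambda>\<xi>. \<xi> j) \<in> mark_space r \<rightarrow>\<^sub>M count_space UNIV"
    using measurable_component_singleton[of j UNIV "\<lambda>(t, x). measure_pmf (bernoulli_pmf (1 - r x))"]
    by (cases j) (simp add: measurable_cong_sets[OF refl sets_measure_pmf_count_space])
  then show ?thesis
    unfolding model_def by (rule measurable_compose[OF measurable_snd])
qed

lemma measurable_walk [measurable]: "(\<lambda>\<omega>. walk \<omega> t) \<in> model r \<rightarrow>\<^sub>M count_space UNIV"
proof (induction t)
  case 0
  then show ?case by (simp add: walk_def)
next
  case (Suc t)
  have "(\<lambda>\<omega>. (\<lambda>a. a + (if fst \<omega> t then 1 else -1)) (walk \<omega> t)) \<in> model r \<rightarrow>\<^sub>M count_space UNIV"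
    by (rule measurable_compose_countable[OF _ Suc.IH]) measurable
  then show ?case by (simp add: walk_def)
qed

lemma tau_eq_enat_iff:
  "tau \<omega> = enat n \<longleftrightarrow> (\<forall>t<n. xi \<omega> t (walk \<omega> t)) \<and> \<not> xi \<omega> n (walk \<omega> n)"
proof (cases "\<exists>t. \<not> xi \<omega> t (walk \<omega> t)")
  case True
  then show ?thesis
    unfolding tau_def
    by (metis (mono_tags, lifting) LeastI_ex enat.inject not_less_Least linorder_neqE_nat)
qed (simp add: tau_def)

lemma enat_le_tau_iff: "enat t \<le> tau \<omega> \<longleftrightarrow> (\<forall>s<t. xi \<omega> s (walk \<omega> s))"
proof (cases "tau \<omega>")
  case (enat n)
  then show ?thesis
    using tau_eq_enat_iff[of \<omega> n] by (auto simp: not_le[symmetric])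
qed (auto simp: tau_def split: if_splits)

lemma measurable_tau_eq [measurable]: "Measurable.pred (model r) (\<lambda>\<omega>. tau \<omega> = enat n)"
  unfolding tau_eq_enat_iff xi_def by measurable

lemma measurable_enat_le_tau [measurable]: "Measurable.pred (model r) (\<lambda>\<omega>. enat n \<le> tau \<omega>)"
  unfolding enat_le_tau_iff xi_def by measurable

section \<open>Paths and the density of the surviving walk\<close>

definition paths :: "nat \<Rightarrow> bool list set" where
  "paths n = {p. length p = n}"

definition cylinder :: "bool list \<Rightarrow> (nat \<Rightarrow> bool) set" where
  "cylinder p = {c. \<forall>t<length p. c t = p ! t}"

lemma finite_paths [simp]: "finite (paths n)"
  unfolding paths_def using finite_lists_length_eq[of "UNIV :: bool set" n] by simp

lemma paths_Suc: "paths (Suc n) = (\<lambda>(q, b). q @ [b]) ` (paths n \<times> UNIV)"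
proof (intro set_eqI iffI)
  fix p assume "p \<in> paths (Suc n)"
  then have "p = butlast p @ [last p]" "butlast p \<in> paths n"
    by (auto simp: paths_def intro: append_butlast_last_id[symmetric])
  then show "p \<in> (\<lambda>(q, b). q @ [b]) ` (paths n \<times> UNIV)" by force
qed (auto simp: paths_def)

lemma sets_cylinder [measurable]: "cylinder p \<in> sets coin_space"
proof -
  have "cylinder p = {c \<in> space coin_space. \<forall>t\<in>{..<length p}. c t \<in> {p ! t}}"
    by (auto simp: cylinder_def)
  also have "\<dots> \<in> sets coin_space"
    by (intro sets.sets_Collect_finite_All sets_Collect_single) auto
  finally show ?thesis .
qed

lemma emeasure_cylinder: "emeasure coin_space (cylinder p) = ennreal ((1/2) ^ length p)"
proof -
  interpret product_prob_space "\<lambda>_. measure_pmf (bernoulli_pmf (1/2))" "UNIV :: nat set"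
    by unfold_locales (simp add: prob_space_measure_pmf)
  have "cylinder p = {c \<in> space coin_space. \<forall>t\<in>{..<length p}. c t \<in> {p ! t}}"
    by (auto simp: cylinder_def)
  also have "emeasure coin_space \<dots> = (\<Prod>t<length p. emeasure (measure_pmf (bernoulli_pmf (1/2))) {p ! t})"
    by (rule emeasure_PiM_Collect) auto
  also have "\<dots> = (\<Prod>t<length p. ennreal (1/2))"
    by (intro prod.cong refl) (simp add: emeasure_pmf_single)
  also have "\<dots> = ennreal ((1/2) ^ length p)"
    by (simp only: prod_constant card_lessThan ennreal_power[symmetric, of "1/2"] zero_le_divide_1_iff zero_le_numeral)
  finally show ?thesis .
qed

lemma cylinder_disjoint: "p \<in> paths n \<Longrightarrow> q \<in> paths n \<Longrightarrow> p \<noteq> q \<Longrightarrow> cylinder p \<inter> cylinder q = {}"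
  by (auto simp: cylinder_def paths_def intro: nth_equalityI)

lemma sets_mark_space_along [measurable]:
  "{\<xi>. \<forall>t<n. \<xi> (t, w t) \<in> Q t} \<in> sets (mark_space r)"
proof -
  have "{\<xi>. \<forall>t<n. \<xi> (t, w t) \<in> Q t} = {\<xi> \<in> space (mark_space r). \<forall>t\<in>{..<n}. \<xi> (t, w t) \<in> Q t}"
    by auto
  also have "\<dots> \<in> sets (mark_space r)"
    by (intro sets.sets_Collect_finite_All sets_Collect_single) (auto split: prod.splits)
  finally show ?thesis .
qed

lemma emeasure_mark_space_along:
  "emeasure (mark_space r) {\<xi>. \<forall>t<n. \<xi> (t, w t) \<in> Q t}
     = (\<Prod>t<n. emeasure (measure_pmf (bernoulli_pmf (1 - r (w t)))) (Q t))"
proof -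
  interpret product_prob_space "\<lambda>(t, x). measure_pmf (bernoulli_pmf (1 - r x))" "UNIV :: (nat \<times> int) set"
    by unfold_locales (auto simp: prob_space_measure_pmf split: prod.splits)
  have inj: "inj_on (\<lambda>t. (t, w t)) {..<n}" by (auto simp: inj_on_def)
  have "{\<xi>. \<forall>t<n. \<xi> (t, w t) \<in> Q t} = {\<xi> \<in> space (mark_space r). \<forall>j\<in>(\<lambda>t. (t, w t)) ` {..<n}. \<xi> j \<in> Q (fst j)}"
    by auto
  also have "emeasure (mark_space r) \<dots>
      = (\<Prod>j\<in>(\<lambda>t. (t, w t)) ` {..<n}. emeasure ((\<lambda>(t, x). measure_pmf (bernoulli_pmf (1 - r x))) j) (Q (fst j)))"
    by (rule emeasure_PiM_Collect) auto
  also have "\<dots> = (\<Prod>t<n. emeasure (measure_pmf (bernoulli_pmf (1 - r (w t)))) (Q t))"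
    by (simp add: prod.reindex[OF inj])
  finally show ?thesis .
qed

lemma prefix_event_eq:
  "{\<omega> :: sample. P (map (fst \<omega>) [0..<n]) (snd \<omega>)} = (\<Union>p\<in>paths n. cylinder p \<times> Collect (P p))"
proof (intro set_eqI iffI)
  fix \<omega> :: sample
  assume "\<omega> \<in> (\<Union>p\<in>paths n. cylinder p \<times> Collect (P p))"
  then obtain p where "p \<in> paths n" "fst \<omega> \<in> cylinder p" "P p (snd \<omega>)" by auto
  moreover from this have "map (fst \<omega>) [0..<n] = p"
    by (auto simp: paths_def cylinder_def intro: nth_equalityI)
  ultimately show "\<omega> \<in> {\<omega>. P (map (fst \<omega>) [0..<n]) (snd \<omega>)}" by simp
qed (force simp: paths_def cylinder_def)

lemma emeasure_prefix_event:
  assumes "\<And>p. Collect (P p) \<in> sets (mark_space r)"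
  shows "emeasure (model r) {\<omega>. P (map (fst \<omega>) [0..<n]) (snd \<omega>)}
       = (\<Sum>p\<in>paths n. ennreal ((1/2) ^ n) * emeasure (mark_space r) (Collect (P p)))"
proof -
  interpret sigma_finite_measure "mark_space r"
    by (rule prob_space_imp_sigma_finite[OF prob_space_mark_space])
  have "emeasure (model r) (\<Union>p\<in>paths n. cylinder p \<times> Collect (P p))
      = (\<Sum>p\<in>paths n. emeasure (model r) (cylinder p \<times> Collect (P p)))"
  proof (rule sum_emeasure[symmetric])
    show "disjoint_family_on (\<lambda>p. cylinder p \<times> Collect (P p)) (paths n)"
      unfolding disjoint_family_on_def using cylinder_disjoint by blast
  qed (use assms in \<open>auto simp: model_def\<close>)
  also have "\<dots> = (\<Sum>p\<in>paths n. ennreal ((1/2) ^ n) * emeasure (mark_space r) (Collect (P p)))"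
    using assms by (intro sum.cong refl)
      (simp add: model_def emeasure_pair_measure_Times emeasure_cylinder paths_def)
  finally show ?thesis by (simp only: prefix_event_eq)
qed

definition list_walk :: "bool list \<Rightarrow> nat \<Rightarrow> int" where
  "list_walk p t = (\<Sum>u<t. if p ! u then 1 else -1)"

lemma walk_eq_list_walk: "t \<le> n \<Longrightarrow> walk \<omega> t = list_walk (map (fst \<omega>) [0..<n]) t"
  unfolding walk_def list_walk_def by (intro sum.cong) auto

lemma list_walk_snoc: "t \<le> length q \<Longrightarrow> list_walk (q @ [b]) t = list_walk q t"
  unfolding list_walk_def by (intro sum.cong) (auto simp: nth_append)

lemma list_walk_snoc_length:
  "list_walk (q @ [b]) (Suc (length q)) = list_walk q (length q) + (if b then 1 else -1)"
  using list_walk_snoc[of "length q" q b] by (simp add: list_walk_def)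

definition path_weight :: "(int \<Rightarrow> real) \<Rightarrow> bool list \<Rightarrow> real" where
  "path_weight r p = (1/2) ^ length p * (\<Prod>t<length p. 1 - r (list_walk p t))"

text \<open>alive_density r n x is P(n \<le> \<tau>, S n = x).\<close>

definition alive_density :: "(int \<Rightarrow> real) \<Rightarrow> nat \<Rightarrow> int \<Rightarrow> real" where
  "alive_density r n x = (\<Sum>p\<in>paths n. if list_walk p n = x then path_weight r p else 0)"

lemma path_weight_snoc:
  "path_weight r (q @ [b]) = 1/2 * (1 - r (list_walk q (length q))) * path_weight r q"
  by (simp add: path_weight_def list_walk_snoc)

lemma alive_density_0: "alive_density r 0 x = (if x = 0 then 1 else 0)"
  by (simp add: alive_density_def path_weight_def paths_def list_walk_def)

lemma alive_density_Suc:
  "alive_density r (Suc n) x = 1/2 * (1 - r (x - 1)) * alive_density r n (x - 1)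
                             + 1/2 * (1 - r (x + 1)) * alive_density r n (x + 1)"
proof -
  have "alive_density r (Suc n) x
      = (\<Sum>q\<in>paths n. \<Sum>b\<in>UNIV. if list_walk (q @ [b]) (Suc n) = x then path_weight r (q @ [b]) else 0)"
    unfolding alive_density_def paths_Suc
    by (subst sum.reindex) (auto simp: inj_on_def sum.cartesian_product case_prod_unfold)
  also have "\<dots> = (\<Sum>q\<in>paths n. 1/2 * (1 - r (x - 1)) * (if list_walk q n = x - 1 then path_weight r q else 0)
                  + 1/2 * (1 - r (x + 1)) * (if list_walk q n = x + 1 then path_weight r q else 0))"
  proof (intro sum.cong refl)
    fix q assume "q \<in> paths n"
    then have "length q = n" by (simp add: paths_def)
    then show "(\<Sum>b\<in>UNIV. if list_walk (q @ [b]) (Suc n) = x then path_weight r (q @ [b]) else 0)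
      = 1/2 * (1 - r (x - 1)) * (if list_walk q n = x - 1 then path_weight r q else 0)
      + 1/2 * (1 - r (x + 1)) * (if list_walk q n = x + 1 then path_weight r q else 0)"
      using list_walk_snoc_length[of q] path_weight_snoc[of r q] by (auto simp: UNIV_bool)
  qed
  also have "\<dots> = 1/2 * (1 - r (x - 1)) * alive_density r n (x - 1) + 1/2 * (1 - r (x + 1)) * alive_density r n (x + 1)"
    unfolding alive_density_def by (simp add: sum.distrib sum_distrib_left)
  finally show ?thesis .
qed

definition unit_valued :: "(int \<Rightarrow> real) \<Rightarrow> bool" where
  "unit_valued r \<longleftrightarrow> (\<forall>x. 0 \<le> r x \<and> r x \<le> 1)"

lemma path_weight_nonneg: "unit_valued r \<Longrightarrow> 0 \<le> path_weight r p"
  unfolding path_weight_def unit_valued_def by (intro mult_nonneg_nonneg prod_nonneg) auto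

lemma alive_density_nonneg: "unit_valued r \<Longrightarrow> 0 \<le> alive_density r n x"
  unfolding alive_density_def by (intro sum_nonneg) (auto simp: path_weight_nonneg)

lemma killed_density_nonneg: "unit_valued r \<Longrightarrow> 0 \<le> r x * alive_density r n x"
  by (simp add: alive_density_nonneg unit_valued_def)

lemma emeasure_mark_space_killed_at:
  assumes r: "unit_valued r"
  shows "emeasure (mark_space r) {\<xi>. \<forall>t<Suc n. \<xi> (t, w t) \<in> {t \<noteq> n}}
       = ennreal ((\<Prod>t<n. 1 - r (w t)) * r (w n))"
proof -
  have "emeasure (mark_space r) {\<xi>. \<forall>t<Suc n. \<xi> (t, w t) \<in> {t \<noteq> n}}
      = (\<Prod>t<Suc n. emeasure (measure_pmf (bernoulli_pmf (1 - r (w t)))) {t \<noteq> n})"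
    by (rule emeasure_mark_space_along)
  also have "\<dots> = (\<Prod>t<n. ennreal (1 - r (w t))) * ennreal (r (w n))"
    using r by (simp add: emeasure_pmf_single unit_valued_def)
  finally show ?thesis
    using r by (simp add: prod_ennreal ennreal_mult prod_nonneg unit_valued_def)
qed

lemma emeasure_stopped_at:
  assumes r: "unit_valued r"
  shows "emeasure (model r) {\<omega>. tau \<omega> = enat n \<and> walk \<omega> n = x} = ennreal (r x * alive_density r n x)"
proof -
  define P where "P p \<xi> \<longleftrightarrow> list_walk p n = x
    \<and> (\<forall>t<Suc n. \<xi> (t, list_walk p t) \<in> {t \<noteq> n})" for p \<xi>
  have "tau \<omega> = enat n \<and> walk \<omega> n = x \<longleftrightarrow> P (map (fst \<omega>) [0..<n]) (snd \<omega>)" for \<omega>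
    by (simp add: P_def tau_eq_enat_iff xi_def walk_eq_list_walk[of _ n] less_Suc_eq all_conj_distrib conj_ac)
  then have event: "{\<omega>. tau \<omega> = enat n \<and> walk \<omega> n = x} = {\<omega>. P (map (fst \<omega>) [0..<n]) (snd \<omega>)}"
    by simp
  have P_eq: "Collect (P p) = (if list_walk p n = x
      then {\<xi>. \<forall>t<Suc n. \<xi> (t, list_walk p t) \<in> {t \<noteq> n}} else {})" for p
    by (cases "list_walk p n = x") (simp_all add: set_eq_iff P_def)
  have sets: "Collect (P p) \<in> sets (mark_space r)" for p
    using sets_mark_space_along[of "Suc n" "list_walk p" "\<lambda>t. {t \<noteq> n}" r] by (simp add: P_eq)
  have marks: "emeasure (mark_space r) (Collect (P p))
      = ennreal (if list_walk p n = x then (\<Prod>t<n. 1 - r (list_walk p t)) * r x else 0)" for p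
  proof (cases "list_walk p n = x")
    case True
    then show ?thesis
      using emeasure_mark_space_killed_at[OF r, of n "list_walk p"] by (simp add: P_eq)
  qed (simp add: P_eq)
  have "emeasure (model r) {\<omega>. tau \<omega> = enat n \<and> walk \<omega> n = x}
      = (\<Sum>p\<in>paths n. ennreal ((1/2) ^ n) * emeasure (mark_space r) (Collect (P p)))"
    unfolding event by (rule emeasure_prefix_event[OF sets])
  also have "\<dots> = (\<Sum>p\<in>paths n. ennreal (if list_walk p n = x then r x * path_weight r p else 0))"
    using r unfolding marks
    by (intro sum.cong refl)
      (auto simp: paths_def path_weight_def unit_valued_def ennreal_mult[symmetric] prod_nonneg mult_ac)
  also have "\<dots> = ennreal (r x * alive_density r n x)"
    using r unfolding alive_density_def sum_distrib_left
    by (subst sum_ennreal) (auto intro!: arg_cong[where f = ennreal] sum.cong simp: path_weight_nonneg unit_valued_def)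
  finally show ?thesis .
qed

lemma hit_prob_sums:
  assumes r: "unit_valued r"
  shows "(\<lambda>n. r i * alive_density r n i) sums hit_prob r i"
proof -
  interpret prob_space "model r" by (rule prob_space_model)
  let ?E = "\<lambda>n. {\<omega>. tau \<omega> = enat n \<and> walk \<omega> n = i}"
  have "Measurable.pred (model r) (\<lambda>\<omega>. tau \<omega> = enat n \<and> walk \<omega> n = i)" for n
    by measurable
  then have [measurable]: "?E n \<in> events" for n
    by (simp add: pred_def)
  have "(\<lambda>n. measure (model r) (?E n)) sums measure (model r) (\<Union>n. ?E n)"
    by (rule measure_UNION) (auto simp: disjoint_family_on_def emeasure_finite)
  moreover have "measure (model r) (?E n) = r i * alive_density r n i" for n
    using emeasure_stopped_at[OF r] killed_density_nonneg[OF r] by (simp add: measure_def)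
  moreover have "(\<Union>n. ?E n) = {\<omega> \<in> space (model r). \<exists>n. tau \<omega> = enat n \<and> walk \<omega> n = i}"
    by auto
  ultimately show ?thesis
    unfolding hit_prob_def by simp
qed

section \<open>The walk killed outside an interval\<close>

definition killing_rate :: "int \<Rightarrow> int \<Rightarrow> (int \<Rightarrow> real) \<Rightarrow> bool" where
  "killing_rate A B r \<longleftrightarrow> unit_valued r \<and> (\<forall>x. x \<notin> {A<..<B} \<longrightarrow> r x = 1)"

lemma killing_rate_unit_valued: "killing_rate A B r \<Longrightarrow> unit_valued r"
  by (simp add: killing_rate_def)

lemma killing_rate_outside: "killing_rate A B r \<Longrightarrow> x \<notin> {A<..<B} \<Longrightarrow> r x = 1"
  by (simp add: killing_rate_def)

lemma alive_density_beyond_barrier_right: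
  assumes "0 < c" "r c = 1" "c < x"
  shows "alive_density r n x = 0"
  using assms(3)
proof (induction n arbitrary: x)
  case (Suc n)
  have "(1 - r (x - 1)) * alive_density r n (x - 1) = 0"
    using Suc assms(2) by (cases "x - 1 = c") auto
  then show ?case
    using Suc by (simp add: alive_density_Suc)
qed (use assms(1) in \<open>simp add: alive_density_0\<close>)

lemma alive_density_beyond_barrier_left:
  assumes "c < 0" "r c = 1" "x < c"
  shows "alive_density r n x = 0"
  using assms(3)
proof (induction n arbitrary: x)
  case (Suc n)
  have "(1 - r (x + 1)) * alive_density r n (x + 1) = 0"
    using Suc assms(2) by (cases "x + 1 = c") auto
  then show ?case
    using Suc by (simp add: alive_density_Suc)
qed (use assms(1) in \<open>simp add: alive_density_0\<close>)

lemma alive_density_antimono: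
  assumes "unit_valued r" "unit_valued r'" "\<And>x. r x \<le> r' x"
  shows "alive_density r' n x \<le> alive_density r n x"
proof -
  have "path_weight r' p \<le> path_weight r p" for p
    using assms unfolding path_weight_def unit_valued_def
    by (intro mult_left_mono prod_mono) auto
  then show ?thesis
    unfolding alive_density_def by (intro sum_mono) auto
qed

lemma tendsto_alive_density:
  assumes "\<And>x. (\<lambda>k. s k x) \<longlonglongrightarrow> r x"
  shows "(\<lambda>k. alive_density (s k) n x) \<longlonglongrightarrow> alive_density r n x"
  unfolding alive_density_def path_weight_def
proof (intro tendsto_sum)
  fix p
  show "(\<lambda>k. if list_walk p n = x then (1/2) ^ length p * (\<Prod>t<length p. 1 - s k (list_walk p t)) else 0)
      \<longlonglongrightarrow> (if list_walk p n = x then (1/2) ^ length p * (\<Prod>t<length p. 1 - r (list_walk p t)) else 0)"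
    by (cases "list_walk p n = x") (auto intro!: tendsto_intros assms)
qed

locale walk_interval =
  fixes A B :: int
  assumes A_neg: "A < 0" and B_pos: "0 < B"
begin

lemma alive_density_outside:
  assumes "killing_rate A B r" "x \<notin> {A..B}"
  shows "alive_density r n x = 0"
proof (cases n)
  case (Suc m)
  have "r (x - 1) = 1" "r (x + 1) = 1"
    using assms by (auto intro!: killing_rate_outside)
  then show ?thesis by (simp add: Suc alive_density_Suc)
qed (use assms A_neg B_pos in \<open>auto simp: alive_density_0\<close>)

lemma sum_interior_eq:
  assumes "killing_rate A B r"
  shows "(\<Sum>y\<in>{A..B}. (1 - r y) * f y) = (\<Sum>y\<in>{A<..<B}. (1 - r y) * f y)"
  by (rule sum.mono_neutral_right) (auto simp: killing_rate_outside[OF assms])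

lemma sum_alive_density_Suc:
  assumes r: "killing_rate A B r"
  shows "(\<Sum>x\<in>{A..B}. \<phi> x * alive_density r (Suc n) x)
       = (\<Sum>y\<in>{A<..<B}. (1 - r y) * alive_density r n y * ((\<phi> (y + 1) + \<phi> (y - 1)) / 2))"
proof -
  define g where "g y = (1 - r y) * alive_density r n y" for y
  have g_outside: "g y = 0" if "y \<notin> {A<..<B}" for y
    using killing_rate_outside[OF r that] by (simp add: g_def)
  have "(\<Sum>x\<in>{A..B}. \<phi> x * g (x - 1)) = (\<Sum>y\<in>{A-1..B-1}. \<phi> (y + 1) * g y)"
    by (rule sum.reindex_bij_witness[of _ "\<lambda>y. y + 1" "\<lambda>x. x - 1"]) auto
  also have "\<dots> = (\<Sum>y\<in>{A<..<B}. \<phi> (y + 1) * g y)"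
    by (rule sum.mono_neutral_right) (auto simp: g_outside)
  finally have left: "(\<Sum>x\<in>{A..B}. \<phi> x * g (x - 1)) = (\<Sum>y\<in>{A<..<B}. \<phi> (y + 1) * g y)" .
  have "(\<Sum>x\<in>{A..B}. \<phi> x * g (x + 1)) = (\<Sum>y\<in>{A+1..B+1}. \<phi> (y - 1) * g y)"
    by (rule sum.reindex_bij_witness[of _ "\<lambda>y. y - 1" "\<lambda>x. x + 1"]) auto
  also have "\<dots> = (\<Sum>y\<in>{A<..<B}. \<phi> (y - 1) * g y)"
    by (rule sum.mono_neutral_right) (auto simp: g_outside)
  finally have right: "(\<Sum>x\<in>{A..B}. \<phi> x * g (x + 1)) = (\<Sum>y\<in>{A<..<B}. \<phi> (y - 1) * g y)" .
  have "(\<Sum>x\<in>{A..B}. \<phi> x * alive_density r (Suc n) x)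
      = 1/2 * (\<Sum>x\<in>{A..B}. \<phi> x * g (x - 1)) + 1/2 * (\<Sum>x\<in>{A..B}. \<phi> x * g (x + 1))"
    unfolding alive_density_Suc g_def sum_distrib_left sum.distrib[symmetric]
    by (intro sum.cong refl) (simp add: algebra_simps)
  also have "\<dots> = 1/2 * (\<Sum>y\<in>{A<..<B}. \<phi> (y + 1) * g y) + 1/2 * (\<Sum>y\<in>{A<..<B}. \<phi> (y - 1) * g y)"
    by (simp only: left right)
  also have "\<dots> = (\<Sum>y\<in>{A<..<B}. (1 - r y) * alive_density r n y * ((\<phi> (y + 1) + \<phi> (y - 1)) / 2))"
    unfolding g_def sum_distrib_left sum.distrib[symmetric]
    by (intro sum.cong refl) (simp add: field_simps)
  finally show ?thesis .
qed

text \<open>For affine \<phi>, the expectation of \<phi>(S) is conserved: the part carried by the surviving walk plus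
  the part already absorbed.\<close>

lemma harmonic_conservation:
  assumes r: "killing_rate A B r" and harmonic: "\<And>y. \<phi> (y + 1) + \<phi> (y - 1) = 2 * \<phi> y"
  shows "(\<Sum>x\<in>{A..B}. \<phi> x * alive_density r n x)
       + (\<Sum>k<n. \<Sum>x\<in>{A..B}. \<phi> x * (r x * alive_density r k x)) = \<phi> 0"
proof (induction n)
  case 0
  show ?case using A_neg B_pos by (simp add: alive_density_0 if_distrib cong: if_cong)
next
  case (Suc n)
  have "(\<Sum>x\<in>{A..B}. \<phi> x * alive_density r (Suc n) x)
      = (\<Sum>y\<in>{A<..<B}. (1 - r y) * (\<phi> y * alive_density r n y))"
    unfolding sum_alive_density_Suc[OF r] harmonic by (simp add: algebra_simps)
  also have "\<dots> = (\<Sum>x\<in>{A..B}. \<phi> x * alive_density r n x) - (\<Sum>x\<in>{A..B}. \<phi> x * (r x * alive_density r n x))"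
    unfolding sum_interior_eq[OF r, symmetric] by (simp add: algebra_simps sum_subtractf)
  finally show ?case using Suc by simp
qed

text \<open>A Lyapunov function that drops by one in expectation at each step inside (A, B) bounds the
  expected time spent there.\<close>

lemma lyapunov_step:
  assumes r: "killing_rate A B r"
    and nonneg: "\<And>x. x \<in> {A..B} \<Longrightarrow> 0 \<le> \<phi> x"
    and drift: "\<And>y. y \<in> {A<..<B} \<Longrightarrow> (\<phi> (y + 1) + \<phi> (y - 1)) / 2 \<le> \<phi> y - 1"
  shows "(\<Sum>x\<in>{A..B}. \<phi> x * alive_density r (Suc n) x)
       \<le> (\<Sum>x\<in>{A..B}. \<phi> x * alive_density r n x) - (\<Sum>x\<in>{A<..<B}. alive_density r n x)"
proof -
  have U: "0 \<le> alive_density r n x" for x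
    by (rule alive_density_nonneg[OF killing_rate_unit_valued[OF r]])
  have "(\<Sum>x\<in>{A..B}. \<phi> x * alive_density r (Suc n) x)
      \<le> (\<Sum>y\<in>{A<..<B}. alive_density r n y * (\<phi> y - 1))"
    unfolding sum_alive_density_Suc[OF r]
  proof (intro sum_mono)
    fix y assume y: "y \<in> {A<..<B}"
    have "0 \<le> (\<phi> (y + 1) + \<phi> (y - 1)) / 2"
      using y by (intro divide_nonneg_pos add_nonneg_nonneg nonneg) auto
    then have "0 \<le> \<phi> y - 1" using drift[OF y] by linarith
    have r01: "0 \<le> 1 - r y" "1 - r y \<le> 1"
      using killing_rate_unit_valued[OF r] by (auto simp: unit_valued_def)
    have "(1 - r y) * alive_density r n y * ((\<phi> (y + 1) + \<phi> (y - 1)) / 2)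
        \<le> (1 - r y) * alive_density r n y * (\<phi> y - 1)"
      using r01 U[of y] by (intro mult_left_mono[OF drift[OF y]]) auto
    also have "\<dots> \<le> alive_density r n y * (\<phi> y - 1)"
      unfolding mult.assoc using r01 U[of y] \<open>0 \<le> \<phi> y - 1\<close>
      by (intro mult_left_le_one_le) auto
    finally show "(1 - r y) * alive_density r n y * ((\<phi> (y + 1) + \<phi> (y - 1)) / 2)
        \<le> alive_density r n y * (\<phi> y - 1)" .
  qed
  moreover have "(\<Sum>y\<in>{A<..<B}. \<phi> y * alive_density r n y) \<le> (\<Sum>x\<in>{A..B}. \<phi> x * alive_density r n x)"
    by (rule sum_mono2) (use nonneg U in \<open>auto intro!: mult_nonneg_nonneg\<close>)
  ultimately show ?thesis
    by (simp add: algebra_simps sum_subtractf)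
qed

lemma occupation_le_lyapunov:
  assumes r: "killing_rate A B r"
    and nonneg: "\<And>x. x \<in> {A..B} \<Longrightarrow> 0 \<le> \<phi> x"
    and drift: "\<And>y. y \<in> {A<..<B} \<Longrightarrow> (\<phi> (y + 1) + \<phi> (y - 1)) / 2 \<le> \<phi> y - 1"
  shows "(\<Sum>k<n. \<Sum>x\<in>{A<..<B}. alive_density r k x) \<le> \<phi> 0"
proof -
  have "(\<Sum>x\<in>{A..B}. \<phi> x * alive_density r n x) + (\<Sum>k<n. \<Sum>x\<in>{A<..<B}. alive_density r k x) \<le> \<phi> 0"
  proof (induction n)
    case 0
    show ?case using A_neg B_pos by (simp add: alive_density_0 if_distrib cong: if_cong)
  next
    case (Suc n)
    then show ?case using lyapunov_step[OF assms, of n] by simp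
  qed
  moreover have "0 \<le> (\<Sum>x\<in>{A..B}. \<phi> x * alive_density r n x)"
    using nonneg alive_density_nonneg[OF killing_rate_unit_valued[OF r]]
    by (intro sum_nonneg mult_nonneg_nonneg) auto
  ultimately show ?thesis by linarith
qed

end

section \<open>Hitting densities\<close>

definition hit_density :: "(int \<Rightarrow> real) \<Rightarrow> int \<Rightarrow> real" where
  "hit_density r i = (\<Sum>n. r i * alive_density r n i)"

lemma hit_prob_eq_hit_density: "unit_valued r \<Longrightarrow> hit_prob r i = hit_density r i"
  unfolding hit_density_def by (rule sums_unique[OF hit_prob_sums])

context walk_interval
begin

lemma expected_occupation_le:
  assumes "killing_rate A B r"
  shows "(\<Sum>k<n. \<Sum>x\<in>{A<..<B}. alive_density r k x) \<le> - of_int (A * B)"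
proof -
  have "(\<Sum>k<n. \<Sum>x\<in>{A<..<B}. alive_density r k x) \<le> of_int ((0 - A) * (B - 0))"
  proof (rule occupation_le_lyapunov[OF assms, where \<phi> = "\<lambda>x. of_int ((x - A) * (B - x))"])
    fix y
    have "((y + 1 - A) * (B - (y + 1)) + (y - 1 - A) * (B - (y - 1))) = 2 * ((y - A) * (B - y) - 1)"
      by (simp add: algebra_simps)
    then show "(of_int ((y + 1 - A) * (B - (y + 1))) + of_int ((y - 1 - A) * (B - (y - 1)))) / 2
        \<le> (of_int ((y - A) * (B - y)) :: real) - 1"
      by (metis (mono_tags) of_int_add of_int_diff of_int_1 of_int_mult of_int_numeral
          nonzero_mult_div_cancel_left order_refl zero_neq_numeral)
  qed simp
  then show ?thesis by simp
qed

lemma summable_occupation: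
  assumes "killing_rate A B r"
  shows "summable (\<lambda>k. \<Sum>x\<in>{A<..<B}. alive_density r k x)"
  using expected_occupation_le[OF assms] alive_density_nonneg[OF killing_rate_unit_valued[OF assms]]
  by (intro summableI_nonneg_bounded[where x = "- of_int (A * B)"]) (auto intro!: sum_nonneg)

lemma summable_alive_density:
  assumes r: "killing_rate A B r" and i: "i \<in> {A<..<B}"
  shows "summable (\<lambda>k. alive_density r k i)"
    and "(\<Sum>k. alive_density r k i) \<le> - of_int (A * B)"
proof -
  have U: "0 \<le> alive_density r k x" for k x
    by (rule alive_density_nonneg[OF killing_rate_unit_valued[OF r]])
  have le: "alive_density r k i \<le> (\<Sum>x\<in>{A<..<B}. alive_density r k x)" for k
    using i U by (intro member_le_sum) auto
  show summable: "summable (\<lambda>k. alive_density r k i)"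
    using le U by (intro summable_comparison_test'[OF summable_occupation[OF r], of 0]) auto
  have "(\<Sum>k. alive_density r k i) \<le> (\<Sum>k. \<Sum>x\<in>{A<..<B}. alive_density r k x)"
    by (intro suminf_le le summable summable_occupation r)
  also have "\<dots> \<le> - of_int (A * B)"
    using expected_occupation_le[OF r] by (intro suminf_le_const summable_occupation r)
  finally show "(\<Sum>k. alive_density r k i) \<le> - of_int (A * B)" .
qed

lemma alive_mass_tendsto_0:
  assumes r: "killing_rate A B r"
  shows "(\<lambda>k. \<Sum>x\<in>{A..B}. alive_density r k x) \<longlonglongrightarrow> 0"
proof -
  have U: "0 \<le> alive_density r k x" for k x
    by (rule alive_density_nonneg[OF killing_rate_unit_valued[OF r]])
  have "(\<Sum>x\<in>{A..B}. alive_density r (Suc k) x) \<le> (\<Sum>x\<in>{A<..<B}. alive_density r k x)" for k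
  proof -
    have "(\<Sum>x\<in>{A..B}. alive_density r (Suc k) x) = (\<Sum>y\<in>{A<..<B}. (1 - r y) * alive_density r k y)"
      using sum_alive_density_Suc[OF r, of "\<lambda>_. 1" k] by simp
    also have "\<dots> \<le> (\<Sum>y\<in>{A<..<B}. alive_density r k y)"
      using killing_rate_unit_valued[OF r] U
      by (intro sum_mono mult_left_le_one_le) (auto simp: unit_valued_def)
    finally show ?thesis .
  qed
  then have "(\<lambda>k. \<Sum>x\<in>{A..B}. alive_density r (Suc k) x) \<longlonglongrightarrow> 0"
    using U by (intro tendsto_sandwich[OF _ _ tendsto_const summable_LIMSEQ_zero[OF summable_occupation[OF r]]])
      (auto intro!: always_eventually sum_nonneg)
  then show ?thesis by (rule LIMSEQ_imp_Suc)
qed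

lemma alive_density_tendsto_0:
  assumes r: "killing_rate A B r"
  shows "(\<lambda>k. alive_density r k x) \<longlonglongrightarrow> 0"
proof (cases "x \<in> {A..B}")
  case True
  have U: "0 \<le> alive_density r k y" for k y
    by (rule alive_density_nonneg[OF killing_rate_unit_valued[OF r]])
  show ?thesis
    using True U
    by (intro tendsto_sandwich[OF _ _ tendsto_const alive_mass_tendsto_0[OF r]]) (auto intro!: always_eventually member_le_sum)
qed (simp add: alive_density_outside[OF r])

lemma harmonic_sums:
  assumes r: "killing_rate A B r" and harmonic: "\<And>y. \<phi> (y + 1) + \<phi> (y - 1) = 2 * \<phi> y"
  shows "(\<lambda>k. \<Sum>x\<in>{A..B}. \<phi> x * (r x * alive_density r k x)) sums \<phi> 0"
proof -
  have "(\<lambda>n. \<phi> 0 - (\<Sum>x\<in>{A..B}. \<phi> x * alive_density r n x)) \<longlonglongrightarrow> \<phi> 0 - (\<Sum>x\<in>{A..B}. \<phi> x * 0)"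
    by (intro tendsto_intros alive_density_tendsto_0 r)
  moreover have "(\<Sum>k<n. \<Sum>x\<in>{A..B}. \<phi> x * (r x * alive_density r k x))
      = \<phi> 0 - (\<Sum>x\<in>{A..B}. \<phi> x * alive_density r n x)" for n
    using harmonic_conservation[OF r harmonic, of n] by simp
  ultimately show ?thesis
    unfolding sums_def by simp
qed

lemma summable_killed_density:
  assumes r: "killing_rate A B r"
  shows "summable (\<lambda>n. r i * alive_density r n i)"
proof (cases "i \<in> {A..B}")
  case True
  have "r i * alive_density r n i \<le> (\<Sum>x\<in>{A..B}. r x * alive_density r n x)" for n
    using True killed_density_nonneg[OF killing_rate_unit_valued[OF r]] by (intro member_le_sum) auto
  then show ?thesis
    using killed_density_nonneg[OF killing_rate_unit_valued[OF r]]
    by (intro summable_comparison_test'[OF sums_summable[OF harmonic_sums[OF r, of "\<lambda>_. 1"]], of 0]) auto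
qed (simp add: alive_density_outside[OF r])

lemma sum_hit_density_harmonic:
  assumes r: "killing_rate A B r" and harmonic: "\<And>y. \<phi> (y + 1) + \<phi> (y - 1) = 2 * \<phi> y"
  shows "(\<Sum>i\<in>{A..B}. \<phi> i * hit_density r i) = \<phi> 0"
proof -
  have "(\<Sum>i\<in>{A..B}. \<phi> i * hit_density r i) = (\<Sum>i\<in>{A..B}. \<Sum>n. \<phi> i * (r i * alive_density r n i))"
    unfolding hit_density_def by (intro sum.cong refl suminf_mult[symmetric] summable_killed_density r)
  also have "\<dots> = (\<Sum>n. \<Sum>i\<in>{A..B}. \<phi> i * (r i * alive_density r n i))"
    by (intro suminf_sum[symmetric] summable_mult summable_killed_density r)
  also have "\<dots> = \<phi> 0"
    by (rule sums_unique[OF harmonic_sums[OF r harmonic], symmetric])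
  finally show ?thesis .
qed

lemma hit_density_outside: "killing_rate A B r \<Longrightarrow> i \<notin> {A..B} \<Longrightarrow> hit_density r i = 0"
  by (simp add: hit_density_def alive_density_outside)

lemma hit_density_interior:
  "killing_rate A B r \<Longrightarrow> i \<in> {A<..<B} \<Longrightarrow> hit_density r i = r i * (\<Sum>n. alive_density r n i)"
  unfolding hit_density_def by (intro suminf_mult summable_alive_density)

text \<open>-AB bounds the expected number of visits to i, so raising the rate at i by \<epsilon> adds at most
  \<epsilon> * -AB to the hitting density there.\<close>

lemma hit_density_le_perturb:
  assumes r: "killing_rate A B r" and r': "killing_rate A B r'" and le: "\<And>x. r x \<le> r' x"
    and perturb: "r' i \<le> r i + \<epsilon>" and i: "i \<in> {A<..<B}"
  shows "hit_density r' i \<le> hit_density r i + \<epsilon> * - of_int (A * B)"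
proof -
  have u: "unit_valued r" "unit_valued r'"
    using r r' by (auto intro: killing_rate_unit_valued)
  have \<epsilon>: "0 \<le> \<epsilon>" using le[of i] perturb by simp
  have visits: "0 \<le> (\<Sum>n. alive_density r n i)"
    by (intro suminf_nonneg summable_alive_density[OF r i] alive_density_nonneg u)
  have "(\<Sum>n. alive_density r' n i) \<le> (\<Sum>n. alive_density r n i)"
    by (intro suminf_le alive_density_antimono u le summable_alive_density r r' i)
  moreover have "0 \<le> (\<Sum>n. alive_density r' n i)"
    by (intro suminf_nonneg summable_alive_density[OF r' i] alive_density_nonneg u)
  ultimately have "hit_density r' i \<le> (r i + \<epsilon>) * (\<Sum>n. alive_density r n i)"
    unfolding hit_density_interior[OF r' i] using u perturb \<epsilon>
    by (intro mult_mono) (auto simp: unit_valued_def)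
  also have "\<dots> \<le> hit_density r i + \<epsilon> * - of_int (A * B)"
    unfolding hit_density_interior[OF r i] distrib_right
    using mult_left_mono[OF summable_alive_density(2)[OF r i] \<epsilon>] by simp
  finally show ?thesis .
qed

lemma hit_density_le_of_tendsto:
  assumes s: "\<And>k. killing_rate A B (s k)" and r: "killing_rate A B r"
    and lim: "\<And>x. (\<lambda>k. s k x) \<longlonglongrightarrow> r x" and bound: "\<And>k. hit_density (s k) i \<le> c"
  shows "hit_density r i \<le> c"
  unfolding hit_density_def
proof (rule suminf_le_const[OF summable_killed_density[OF r]])
  fix N
  have "(\<Sum>n<N. s k i * alive_density (s k) n i) \<le> c" for k
  proof -
    have "(\<Sum>n<N. s k i * alive_density (s k) n i) \<le> hit_density (s k) i"
      unfolding hit_density_def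
      using killed_density_nonneg[OF killing_rate_unit_valued[OF s]]
      by (intro sum_le_suminf summable_killed_density s) auto
    then show ?thesis using bound[of k] by simp
  qed
  moreover have "(\<lambda>k. \<Sum>n<N. s k i * alive_density (s k) n i) \<longlonglongrightarrow> (\<Sum>n<N. r i * alive_density r n i)"
    by (intro tendsto_intros lim tendsto_alive_density)
  ultimately show "(\<Sum>n<N. r i * alive_density r n i) \<le> c"
    by (intro LIMSEQ_le_const2) auto
qed

lemma rate_le_hit_density_0:
  assumes r: "killing_rate A B r"
  shows "r 0 \<le> hit_density r 0"
proof -
  have "(\<Sum>n\<in>{0}. r 0 * alive_density r n 0) \<le> hit_density r 0"
    unfolding hit_density_def using killed_density_nonneg[OF killing_rate_unit_valued[OF r]]
    by (intro sum_le_suminf summable_killed_density r) auto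
  then show ?thesis by (simp add: alive_density_0)
qed

end

section \<open>The maximal admissible rate\<close>

text \<open>Pair the weights with the affine functions j - A and B - j, which are positive inside (A, B).\<close>

lemma endpoint_weights_nonpos:
  fixes d :: "int \<Rightarrow> real"
  assumes "A < B" and total: "(\<Sum>j\<in>{A..B}. d j) = 0" and mean: "(\<Sum>j\<in>{A..B}. of_int j * d j) = 0"
    and interior: "\<And>j. j \<in> {A<..<B} \<Longrightarrow> 0 \<le> d j"
  shows "d A \<le> 0" and "d B \<le> 0"
proof -
  have split: "(\<Sum>j\<in>{A..B}. g j) = g A + g B + (\<Sum>j\<in>{A<..<B}. g j)" for g :: "int \<Rightarrow> real"
  proof -
    have "{A..B} = insert A (insert B {A<..<B})" using \<open>A < B\<close> by auto
    then show ?thesis using \<open>A < B\<close> by (simp add: add.assoc)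
  qed
  have "(\<Sum>j\<in>{A..B}. (of_int j - of_int A) * d j) = 0"
    using total mean by (simp add: left_diff_distrib sum_subtractf flip: sum_distrib_left)
  moreover have "0 \<le> (\<Sum>j\<in>{A<..<B}. (of_int j - of_int A) * d j)"
    using interior by (intro sum_nonneg mult_nonneg_nonneg) auto
  ultimately have "(of_int B - of_int A) * d B \<le> 0"
    unfolding split by simp
  then show "d B \<le> 0"
    using \<open>A < B\<close> by (simp add: mult_le_0_iff)
  have "(\<Sum>j\<in>{A..B}. (of_int B - of_int j) * d j) = 0"
    using total mean by (simp add: left_diff_distrib sum_subtractf flip: sum_distrib_left)
  moreover have "0 \<le> (\<Sum>j\<in>{A<..<B}. (of_int B - of_int j) * d j)"
    using interior by (intro sum_nonneg mult_nonneg_nonneg) auto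
  ultimately have "(of_int B - of_int A) * d A \<le> 0"
    unfolding split by simp
  then show "d A \<le> 0"
    using \<open>A < B\<close> by (simp add: mult_le_0_iff)
qed

locale walk_target = walk_interval +
  fixes \<mu> :: "int pmf"
  assumes prob_interval: "measure_pmf.prob \<mu> {A..B} = 1"
    and centred: "measure_pmf.expectation \<mu> real_of_int = 0"
    and pmf_A_pos: "0 < pmf \<mu> A" and pmf_B_pos: "0 < pmf \<mu> B"
begin

lemma sum_pmf: "(\<Sum>j\<in>{A..B}. pmf \<mu> j) = 1"
  using prob_interval by (simp add: measure_measure_pmf_finite)

lemma pmf_outside: "i \<notin> {A..B} \<Longrightarrow> pmf \<mu> i = 0"
proof -
  assume i: "i \<notin> {A..B}"
  have "pmf \<mu> i + (\<Sum>j\<in>{A..B}. pmf \<mu> j) = measure_pmf.prob \<mu> (insert i {A..B})"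
    using i by (simp add: measure_measure_pmf_finite)
  then show ?thesis
    using sum_pmf measure_pmf.prob_le_1[of \<mu> "insert i {A..B}"] pmf_nonneg[of \<mu> i] by linarith
qed

lemma sum_pmf_mean: "(\<Sum>j\<in>{A..B}. of_int j * pmf \<mu> j) = 0"
proof -
  have "measure_pmf.expectation \<mu> real_of_int = (\<Sum>j\<in>{A..B}. pmf \<mu> j *\<^sub>R real_of_int j)"
    by (rule integral_measure_pmf) (simp, meson pmf_outside set_pmf_iff)
  then show ?thesis using centred by (simp add: mult.commute)
qed

lemma R_set_iff:
  "r \<in> R_set A B \<mu> \<longleftrightarrow> killing_rate A B r \<and> (\<forall>i\<in>{A<..<B}. hit_density r i \<le> pmf \<mu> i)"
  by (auto simp: R_set_def killing_rate_def unit_valued_def hit_prob_eq_hit_density)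

lemma interval_indicator_in_R_set: "(\<lambda>x. if x \<in> {A<..<B} then 0 else 1) \<in> R_set A B \<mu>"
proof -
  have r: "killing_rate A B (\<lambda>x. if x \<in> {A<..<B} then 0 else 1)"
    by (simp add: killing_rate_def unit_valued_def)
  show ?thesis
    unfolding R_set_iff using r by (simp add: hit_density_interior)
qed

lemma R_set_max:
  assumes "r \<in> R_set A B \<mu>" "r' \<in> R_set A B \<mu>"
  shows "(\<lambda>x. max (r x) (r' x)) \<in> R_set A B \<mu>"
proof -
  have r: "killing_rate A B r" "killing_rate A B r'"
    and bound: "\<forall>i\<in>{A<..<B}. hit_density r i \<le> pmf \<mu> i" "\<forall>i\<in>{A<..<B}. hit_density r' i \<le> pmf \<mu> i"
    using assms by (auto simp: R_set_iff)
  have m: "killing_rate A B (\<lambda>x. max (r x) (r' x))"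
    using r by (auto simp: killing_rate_def unit_valued_def le_max_iff_disj)
  have "hit_density (\<lambda>x. max (r x) (r' x)) i \<le> pmf \<mu> i" if i: "i \<in> {A<..<B}" for i
  proof (cases "r' i \<le> r i")
    case True
    then have "hit_density (\<lambda>x. max (r x) (r' x)) i \<le> hit_density r i"
      using hit_density_le_perturb[OF r(1) m _ _ i, of 0] by simp
    then show ?thesis using bound i by fastforce
  next
    case False
    then have "hit_density (\<lambda>x. max (r x) (r' x)) i \<le> hit_density r' i"
      using hit_density_le_perturb[OF r(2) m _ _ i, of 0] by simp
    then show ?thesis using bound i by fastforce
  qed
  with m show ?thesis by (simp add: R_set_iff)
qed

lemma R_set_bounded: "r \<in> R_set A B \<mu> \<Longrightarrow> 0 \<le> r x \<and> r x \<le> 1"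
  by (simp add: R_set_def)

definition r_max :: "int \<Rightarrow> real" where
  "r_max x = (SUP r\<in>R_set A B \<mu>. r x)"

lemma bdd_above_R_set: "bdd_above ((\<lambda>r. r x) ` R_set A B \<mu>)"
  using R_set_bounded by (intro bdd_aboveI[of _ 1]) auto

lemma R_set_le_r_max: "r \<in> R_set A B \<mu> \<Longrightarrow> r x \<le> r_max x"
  unfolding r_max_def by (rule cSUP_upper[OF _ bdd_above_R_set])

lemma killing_rate_r_max: "killing_rate A B r_max"
proof -
  have "r_max x \<le> 1" for x
    unfolding r_max_def using R_set_bounded interval_indicator_in_R_set by (intro cSUP_least) auto
  moreover have "0 \<le> r_max x" and "x \<notin> {A<..<B} \<Longrightarrow> 1 \<le> r_max x" for x
    using R_set_le_r_max[OF interval_indicator_in_R_set, of x] by (auto split: if_splits)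
  ultimately show ?thesis
    by (auto simp: killing_rate_def unit_valued_def intro: order.antisym)
qed

lemma R_set_approx_r_max:
  assumes "0 < \<delta>"
  shows "\<exists>s\<in>R_set A B \<mu>. \<forall>x\<in>{A<..<B}. r_max x - \<delta> < s x"
proof -
  have "finite F \<Longrightarrow> \<exists>s\<in>R_set A B \<mu>. \<forall>x\<in>F. r_max x - \<delta> < s x" for F
  proof (induction F rule: finite_induct)
    case empty
    then show ?case using interval_indicator_in_R_set by blast
  next
    case (insert x F)
    then obtain s where s: "s \<in> R_set A B \<mu>" "\<forall>y\<in>F. r_max y - \<delta> < s y" by blast
    have "r_max x - \<delta> < (SUP r\<in>R_set A B \<mu>. r x)"
      using assms by (simp add: r_max_def)
    then obtain r where r: "r \<in> R_set A B \<mu>" "r_max x - \<delta> < r x"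
      using interval_indicator_in_R_set by (subst (asm) less_cSUP_iff[OF _ bdd_above_R_set]) auto
    show ?case
      using s r by (intro bexI[OF _ R_set_max[OF s(1) r(1)]]) (auto simp: less_max_iff_disj)
  qed
  then show ?thesis by simp
qed

lemma r_max_in_R_set: "r_max \<in> R_set A B \<mu>"
proof -
  have "\<forall>k. \<exists>s. s \<in> R_set A B \<mu> \<and> (\<forall>x\<in>{A<..<B}. r_max x - inverse (real (Suc k)) < s x)"
    using R_set_approx_r_max by (simp add: Bex_def)
  then obtain s where s: "\<And>k. s k \<in> R_set A B \<mu>"
    and close: "\<And>k x. x \<in> {A<..<B} \<Longrightarrow> r_max x - inverse (real (Suc k)) < s k x"
    by (metis choice)
  have rates: "killing_rate A B (s k)" for k
    using s by (simp add: R_set_iff)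
  have "(\<lambda>k. s k x) \<longlonglongrightarrow> r_max x" for x
  proof (cases "x \<in> {A<..<B}")
    case True
    have lower: "(\<lambda>k. r_max x - inverse (real (Suc k))) \<longlonglongrightarrow> r_max x"
      using tendsto_diff[OF tendsto_const LIMSEQ_inverse_real_of_nat, of "r_max x"] by simp
    show ?thesis
    proof (rule tendsto_sandwich[OF _ _ lower tendsto_const])
      show "\<forall>\<^sub>F k in sequentially. r_max x - inverse (real (Suc k)) \<le> s k x"
        using close[OF True] by (intro always_eventually allI less_imp_le)
      show "\<forall>\<^sub>F k in sequentially. s k x \<le> r_max x"
        using R_set_le_r_max[OF s] by (intro always_eventually allI)
    qed
  next
    case False
    then show ?thesis
      using killing_rate_outside[OF rates] killing_rate_outside[OF killing_rate_r_max] by simp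
  qed
  then have "hit_density r_max i \<le> pmf \<mu> i" if "i \<in> {A<..<B}" for i
    by (rule hit_density_le_of_tendsto[OF rates killing_rate_r_max]) (use s that in \<open>simp add: R_set_iff\<close>)
  then show ?thesis
    by (simp add: R_set_iff killing_rate_r_max)
qed

lemma hit_density_r_max_le: "i \<in> {A<..<B} \<Longrightarrow> hit_density r_max i \<le> pmf \<mu> i"
  using r_max_in_R_set by (simp add: R_set_iff)

lemma r_max_raise_in_R_set:
  assumes i: "i \<in> {A<..<B}" and \<epsilon>: "0 \<le> \<epsilon>" "r_max i + \<epsilon> \<le> 1"
    and small: "\<epsilon> * - real_of_int (A * B) \<le> pmf \<mu> i - hit_density r_max i"
  shows "r_max(i := r_max i + \<epsilon>) \<in> R_set A B \<mu>"
proof -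
  define r where "r = r_max(i := r_max i + \<epsilon>)"
  have le: "r_max x \<le> r x" for x
    using \<epsilon> by (simp add: r_def)
  have r: "killing_rate A B r"
    using killing_rate_r_max \<epsilon> i by (auto simp: killing_rate_def unit_valued_def r_def)
  have "hit_density r j \<le> pmf \<mu> j" if j: "j \<in> {A<..<B}" for j
  proof (cases "j = i")
    case True
    have "hit_density r i \<le> hit_density r_max i + \<epsilon> * - real_of_int (A * B)"
      by (intro hit_density_le_perturb[OF killing_rate_r_max r le _ i]) (simp add: r_def)
    then have "hit_density r i \<le> pmf \<mu> i"
      using small by linarith
    then show ?thesis using True by simp
  next
    case False
    then have "r j = r_max j"
      by (simp add: r_def)
    then have "hit_density r j \<le> hit_density r_max j"
      using hit_density_le_perturb[OF killing_rate_r_max r le _ j, of 0] by simp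
    then show ?thesis
      using hit_density_r_max_le[OF j] by linarith
  qed
  then show ?thesis
    using r by (simp add: R_set_iff r_def)
qed

text \<open>Where r_max is below one, the constraint is tight: otherwise r_max could be raised there.\<close>

lemma hit_density_r_max_eq_interior:
  assumes i: "i \<in> {A<..<B}" and lt1: "r_max i < 1"
  shows "hit_density r_max i = pmf \<mu> i"
proof (rule ccontr)
  have visits: "0 < - real_of_int (A * B)"
    using A_neg B_pos by (simp add: mult_neg_pos)
  assume "hit_density r_max i \<noteq> pmf \<mu> i"
  with hit_density_r_max_le[OF i] have "0 < pmf \<mu> i - hit_density r_max i"
    by simp
  then have gap: "0 < (pmf \<mu> i - hit_density r_max i) / - real_of_int (A * B)"
    using visits by (rule divide_pos_pos)
  define \<epsilon> where "\<epsilon> = min (1 - r_max i) ((pmf \<mu> i - hit_density r_max i) / - real_of_int (A * B))"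
  have "\<epsilon> \<le> (pmf \<mu> i - hit_density r_max i) / - real_of_int (A * B)"
    unfolding \<epsilon>_def by (rule min.cobounded2)
  then have \<epsilon>: "0 < \<epsilon>" "r_max i + \<epsilon> \<le> 1" "\<epsilon> * - real_of_int (A * B) \<le> pmf \<mu> i - hit_density r_max i"
    using lt1 gap by (simp_all only: pos_le_divide_eq[OF visits]) (simp_all add: \<epsilon>_def)
  then have "r_max(i := r_max i + \<epsilon>) \<in> R_set A B \<mu>"
    by (intro r_max_raise_in_R_set i) auto
  then show False
    using R_set_le_r_max[of _ i] \<epsilon>(1) by fastforce
qed

lemma hit_density_r_max_endpoints: "pmf \<mu> A \<le> hit_density r_max A" "pmf \<mu> B \<le> hit_density r_max B"
proof -
  have "(\<Sum>j\<in>{A..B}. pmf \<mu> j - hit_density r_max j) = 0"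
    using sum_hit_density_harmonic[OF killing_rate_r_max, of "\<lambda>_. 1"] sum_pmf
    by (simp add: sum_subtractf)
  moreover have "(\<Sum>j\<in>{A..B}. of_int j * (pmf \<mu> j - hit_density r_max j)) = 0"
    using sum_hit_density_harmonic[OF killing_rate_r_max, of real_of_int] sum_pmf_mean
    by (simp add: right_diff_distrib sum_subtractf)
  moreover have "0 \<le> pmf \<mu> j - hit_density r_max j" if "j \<in> {A<..<B}" for j
    using hit_density_r_max_le[OF that] by simp
  ultimately show "pmf \<mu> A \<le> hit_density r_max A" "pmf \<mu> B \<le> hit_density r_max B"
    using endpoint_weights_nonpos[of A B "\<lambda>j. pmf \<mu> j - hit_density r_max j"] A_neg B_pos by auto
qed

text \<open>A site with rate one would be a barrier, and the mass of \<mu> beyond it could never be reached.\<close>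

lemma r_max_less_1:
  assumes i: "i \<in> {A<..<B}"
  shows "r_max i < 1"
proof (rule ccontr)
  assume "\<not> r_max i < 1"
  then have barrier: "r_max i = 1"
    using killing_rate_r_max by (simp add: killing_rate_def unit_valued_def order.antisym)
  consider "0 < i" | "i = 0" | "i < 0" by linarith
  then show False
  proof cases
    case 1
    then have "hit_density r_max B = 0"
      using i alive_density_beyond_barrier_right[where c = i and r = r_max, OF 1 barrier] by (simp add: hit_density_def)
    then show False using hit_density_r_max_endpoints(2) pmf_B_pos by simp
  next
    case 2
    have "1 \<le> pmf \<mu> 0"
      using rate_le_hit_density_0[OF killing_rate_r_max] hit_density_r_max_le i barrier 2 by fastforce
    moreover have "pmf \<mu> 0 + pmf \<mu> A \<le> 1"
      using A_neg measure_pmf.prob_le_1[of \<mu> "{0, A}"] by (simp add: measure_measure_pmf_finite)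
    ultimately show False using pmf_A_pos by simp
  next
    case 3
    then have "hit_density r_max A = 0"
      using i alive_density_beyond_barrier_left[where c = i and r = r_max, OF 3 barrier] by (simp add: hit_density_def)
    then show False using hit_density_r_max_endpoints(1) pmf_A_pos by simp
  qed
qed

lemma hit_density_r_max: "hit_density r_max i = pmf \<mu> i"
proof -
  have interior: "hit_density r_max j = pmf \<mu> j" if "j \<in> {A<..<B}" for j
    using hit_density_r_max_eq_interior[OF that r_max_less_1[OF that]] .
  have "{A..B} = insert A (insert B {A<..<B})" using A_neg B_pos by auto
  then have "(\<Sum>j\<in>{A..B}. pmf \<mu> j - hit_density r_max j)
      = (pmf \<mu> A - hit_density r_max A) + (pmf \<mu> B - hit_density r_max B)"
    using A_neg B_pos interior by simp
  moreover have "(\<Sum>j\<in>{A..B}. pmf \<mu> j - hit_density r_max j) = 0"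
    using sum_hit_density_harmonic[OF killing_rate_r_max, of "\<lambda>_. 1"] sum_pmf
    by (simp add: sum_subtractf)
  ultimately have "hit_density r_max A = pmf \<mu> A" "hit_density r_max B = pmf \<mu> B"
    using hit_density_r_max_endpoints by linarith+
  show ?thesis
  proof (cases "i \<in> {A..B}")
    case True
    then consider "i = A" | "i = B" | "i \<in> {A<..<B}" by fastforce
    then show ?thesis
      using \<open>hit_density r_max A = pmf \<mu> A\<close> \<open>hit_density r_max B = pmf \<mu> B\<close> interior by cases auto
  qed (simp add: hit_density_outside[OF killing_rate_r_max] pmf_outside)
qed

end

section \<open>Stopping time and uniform integrability\<close>

lemma stopping_time_tau: "stopping_time_enat (filt r) tau"
  unfolding stopping_time_enat_def
proof
  fix t :: nat
  let ?N = "PiM {..t} (\<lambda>_. count_space (UNIV :: (int \<times> bool) set))"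
  define f where "f \<omega> = restrict (\<lambda>u. (walk \<omega> u, xi \<omega> u (walk \<omega> u))) {..t}" for \<omega>
  have f: "f \<in> filt r t \<rightarrow>\<^sub>M ?N"
    unfolding filt_def f_def by (rule measurable_vimage_algebra1) (auto simp: space_PiM)
  have "Measurable.pred ?N (\<lambda>g. \<not> snd (g u))" if "u \<in> {..t}" for u
  proof -
    have "(\<lambda>g. g u) \<in> ?N \<rightarrow>\<^sub>M count_space UNIV"
      by (rule measurable_component_singleton) (use that in simp)
    then show ?thesis by (rule measurable_compose) simp
  qed
  then have P: "Measurable.pred ?N (\<lambda>g. \<exists>u\<in>{..t}. \<not> snd (g u))"
    by (intro pred_intros_finite) auto
  have "Measurable.pred (filt r t) (\<lambda>\<omega>. \<exists>u\<in>{..t}. \<not> snd (f \<omega> u))"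
    using measurable_compose[OF f P] by (simp add: comp_def)
  moreover have "tau \<omega> \<le> enat t \<longleftrightarrow> (\<exists>u\<in>{..t}. \<not> snd (f \<omega> u))" for \<omega>
    using enat_le_tau_iff[of "Suc t" \<omega>]
    by (auto simp: f_def not_le[symmetric] Suc_ile_eq less_Suc_eq_le)
  ultimately show "Measurable.pred (filt r t) (\<lambda>\<omega>. tau \<omega> \<le> enat t)"
    by simp
qed

lemma stopped_eq_walk: "\<exists>s. enat s \<le> tau \<omega> \<and> stopped \<omega> t = walk \<omega> s"
proof (cases "tau \<omega>")
  case (enat n)
  then show ?thesis by (intro exI[of _ "min t n"]) (simp add: stopped_def)
next
  case infinity
  then show ?thesis by (intro exI[of _ t]) (simp add: stopped_def)
qed

lemma measurable_stopped: "(\<lambda>\<omega>. real_of_int (stopped \<omega> t)) \<in> borel_measurable (model r)"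
proof -
  let ?m = "\<lambda>\<omega>. case tau \<omega> of enat n \<Rightarrow> min t n | \<infinity> \<Rightarrow> t"
  have "?m -` {m} \<inter> space (model r) \<in> sets (model r)" for m
  proof -
    have "?m \<omega> = m \<longleftrightarrow> (m < t \<and> tau \<omega> = enat m) \<or> (m = t \<and> enat t \<le> tau \<omega>)" for \<omega>
      by (cases "tau \<omega>") (auto simp: min_def)
    then have "?m -` {m} \<inter> space (model r) = {\<omega> \<in> space (model r). (m < t \<and> tau \<omega> = enat m) \<or> (m = t \<and> enat t \<le> tau \<omega>)}"
      by auto
    also have "\<dots> \<in> sets (model r)"
      by measurable
    finally show ?thesis .
  qed
  then have "?m \<in> model r \<rightarrow>\<^sub>M count_space UNIV"
    by (simp add: measurable_count_space_eq2_countable)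
  then have "(\<lambda>\<omega>. stopped \<omega> t) \<in> model r \<rightarrow>\<^sub>M count_space UNIV"
    unfolding stopped_def by (rule measurable_compose_countable[rotated]) measurable
  then show ?thesis
    by (rule measurable_compose) simp
qed

lemma emeasure_mark_true:
  assumes "unit_valued r"
  shows "emeasure (model r) {\<omega>. xi \<omega> t x} = ennreal (1 - r x)"
proof -
  interpret product_prob_space "\<lambda>(t, x). measure_pmf (bernoulli_pmf (1 - r x))" "UNIV :: (nat \<times> int) set"
    by unfold_locales (auto simp: prob_space_measure_pmf split: prod.splits)
  have D: "{\<xi> \<in> space (mark_space r). \<xi> (t, x) \<in> {True}} \<in> sets (mark_space r)"
    by (rule sets_Collect_single) auto
  have "emeasure (model r) {\<omega>. xi \<omega> t x} = emeasure (mark_space r) {\<xi> \<in> space (mark_space r). \<xi> (t, x) \<in> {True}}"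
    using emeasure_prefix_event[of "\<lambda>_ \<xi>. \<xi> (t, x)" r 0] D by (simp add: xi_def paths_def)
  also have "\<dots> = ennreal (1 - r x)"
    using assms by (subst emeasure_PiM_Collect_single) (auto simp: emeasure_pmf_single unit_valued_def)
  finally show ?thesis .
qed

lemma uniformly_integrable_AE_bounded:
  assumes "\<And>t. X t \<in> borel_measurable M" and bounded: "AE \<omega> in M. \<forall>t. \<bar>X t \<omega>\<bar> \<le> C"
  shows "uniformly_integrable M X"
  unfolding uniformly_integrable_def
proof (intro conjI allI assms tendsto_eventually eventually_at_top_linorderI)
  fix K assume "C \<le> K"
  have "(\<integral>\<^sup>+ \<omega>. ennreal \<bar>X t \<omega>\<bar> * indicator {\<omega> \<in> space M. K < \<bar>X t \<omega>\<bar>} \<omega> \<partial>M) = (\<integral>\<^sup>+ \<omega>. 0 \<partial>M)" for t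
  proof (rule nn_integral_cong_AE)
    show "AE \<omega> in M. ennreal \<bar>X t \<omega>\<bar> * indicator {\<omega> \<in> space M. K < \<bar>X t \<omega>\<bar>} \<omega> = 0"
      using bounded by eventually_elim (use \<open>C \<le> K\<close> in \<open>auto simp: indicator_def dest: spec[of _ t]\<close>)
  qed
  then show "(SUP t. \<integral>\<^sup>+ \<omega>. ennreal \<bar>X t \<omega>\<bar> * indicator {\<omega> \<in> space M. K < \<bar>X t \<omega>\<bar>} \<omega> \<partial>M) = 0"
    by simp
qed

context walk_interval
begin

lemma AE_tau_finite:
  assumes r: "killing_rate A B r"
  shows "AE \<omega> in model r. tau \<omega> \<noteq> \<infinity>"
proof -
  interpret prob_space "model r" by (rule prob_space_model)
  define H where "H i = {\<omega> \<in> space (model r). \<exists>n. tau \<omega> = enat n \<and> walk \<omega> n = i}" for i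
  have "Measurable.pred (model r) (\<lambda>\<omega>. \<exists>n. tau \<omega> = enat n \<and> walk \<omega> n = i)" for i
    by measurable
  then have H: "H i \<in> events" for i
    by (simp add: H_def pred_def)
  have "prob (\<Union>i\<in>{A..B}. H i) = (\<Sum>i\<in>{A..B}. hit_prob r i)"
    unfolding hit_prob_def H_def[symmetric] using H
    by (intro finite_measure_finite_Union) (auto simp: disjoint_family_on_def H_def)
  also have "\<dots> = 1"
    using sum_hit_density_harmonic[OF r, of "\<lambda>_. 1"]
    by (simp add: hit_prob_eq_hit_density killing_rate_unit_valued[OF r])
  finally have "AE \<omega> in model r. \<omega> \<in> (\<Union>i\<in>{A..B}. H i)"
    by (rule AE_prob_1)
  then show ?thesis
    by (rule AE_mp) (auto simp: H_def)
qed

lemma walk_in_interval: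
  assumes killed: "\<forall>t x. x \<notin> {A<..<B} \<longrightarrow> \<not> xi \<omega> t x" and "enat s \<le> tau \<omega>"
  shows "walk \<omega> s \<in> {A..B}"
  using assms(2)
proof (induction s)
  case (Suc s)
  then have "xi \<omega> s (walk \<omega> s)"
    using enat_le_tau_iff by blast
  then have "walk \<omega> s \<in> {A<..<B}"
    using killed by blast
  then show ?case
    by (auto simp: walk_def)
qed (use A_neg B_pos in \<open>simp add: walk_def\<close>)

lemma uniformly_integrable_stopped:
  assumes r: "killing_rate A B r"
  shows "uniformly_integrable (model r) (\<lambda>t \<omega>. real_of_int (stopped \<omega> t))"
proof (rule uniformly_integrable_AE_bounded[OF measurable_stopped])
  have "AE \<omega> in model r. \<not> xi \<omega> t x" if "x \<notin> {A<..<B}" for t x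
  proof (rule AE_I')
    show "{\<omega>. xi \<omega> t x} \<in> null_sets (model r)"
      using emeasure_mark_true[OF killing_rate_unit_valued[OF r]] killing_rate_outside[OF r that]
        measurable_mark[where r = r and j = "(t, x)"]
      by (auto simp: null_sets_def xi_def pred_def)
  qed auto
  then have "AE \<omega> in model r. \<forall>t x. x \<notin> {A<..<B} \<longrightarrow> \<not> xi \<omega> t x"
    by (simp add: AE_all_countable)
  then show "AE \<omega> in model r. \<forall>t. \<bar>real_of_int (stopped \<omega> t)\<bar> \<le> of_int (B - A)"
  proof (rule AE_mp, intro AE_I2 impI allI)
    fix \<omega> t assume "\<forall>t x. x \<notin> {A<..<B} \<longrightarrow> \<not> xi \<omega> t x"
    then have "stopped \<omega> t \<in> {A..B}"
      using stopped_eq_walk[of \<omega> t] walk_in_interval by metis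
    then show "\<bar>real_of_int (stopped \<omega> t)\<bar> \<le> of_int (B - A)"
      using A_neg B_pos by (simp add: abs_le_iff)
  qed
qed

end

theorem proposition1:
  fixes A B :: int and \<mu> :: "int pmf"
  assumes "A < 0" and "0 < B"
    and "integrable (measure_pmf \<mu>) real_of_int"
    and "measure_pmf.expectation \<mu> real_of_int = 0"
    and "measure_pmf.prob \<mu> {A..B} = 1"
    and "pmf \<mu> A > 0" and "pmf \<mu> B > 0"
  shows "\<exists>rmax \<in> R_set A B \<mu>.
           (\<forall>r \<in> R_set A B \<mu>. \<forall>i. r i \<le> rmax i)
         \<and> stopping_time_enat (filt rmax) tau
         \<and> (AE \<omega> in model rmax. tau \<omega> \<noteq> \<infinity>)
         \<and> (\<forall>i. hit_prob rmax i = pmf \<mu> i)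
         \<and> uniformly_integrable (model rmax) (\<lambda>t \<omega>. real_of_int (stopped \<omega> t))"
proof -
  \<comment> \<open>integrability of \<mu> is automatic, as \<mu> is supported in [A, B]\<close>
  interpret walk_target A B \<mu>
    using assms by unfold_locales auto
  have r: "killing_rate A B r_max" by (rule killing_rate_r_max)
  show ?thesis
  proof (intro bexI[OF _ r_max_in_R_set] conjI ballI allI)
    show "r i \<le> r_max i" if "r \<in> R_set A B \<mu>" for r i
      using R_set_le_r_max[OF that] .
    show "hit_prob r_max i = pmf \<mu> i" for i
      using hit_prob_eq_hit_density[OF killing_rate_unit_valued[OF r]] hit_density_r_max by simp
    show "stopping_time_enat (filt r_max) tau"
      by (rule stopping_time_tau)
    show "AE \<omega> in model r_max. tau \<omega> \<noteq> \<infinity>"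
      by (rule AE_tau_finite[OF r])
    show "uniformly_integrable (model r_max) (\<lambda>t \<omega>. real_of_int (stopped \<omega> t))"
      by (rule uniformly_integrable_stopped[OF r])
  qed
qed

end
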